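(* Let $Z_n,n\ge1$ be positive random variables with distribution functions $H_n$ such that for all large $z$, $$1-H_n(z)=\exp(-\vartheta_nz^q),$$ where $q>0$ and the constants $\vartheta_n$ satisfy $\vartheta_n\in[a,b]$ for all $n\ge1$, with $0<a<b<\infty$. Let $S$ be a non-negative random variable with distribution function with upper endpoint $1$ whose survival function is regularly varying at $1$ with index $\gamma\ge0$, with $Z_n$ independent of $S$ for each $n$. If $u_n,n\ge1$ are positive constants with $\lim_{n\to\infty}u_n=\infty$, then $$P(SZ_n>u_n)\sim\Gamma(\gamma+1)\exp(-\vartheta_nu_n^q)\,P\left(S>1-\frac{1}{q\vartheta_nu_n^q}\right),\qquad n\to\infty.$$
   Context: A non-negative random variable $V$ has a survival function regularly varying at $1$ with index $\gamma\ge0$ if $\lim_{u\to\infty}\frac{P(V>1-t/u)}{P(V>1-1/u)}=t^\gamma$ for all $t>0$. $x_n\sim y_n$ means $x_n/y_n\to1$. *)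

theory Defs
  imports "HOL-Probability.Probability" "HOL-Library.Landau_Symbols"
begin

definition surv_regvar_at_1 :: "'a measure \<Rightarrow> ('a \<Rightarrow> real) \<Rightarrow> real \<Rightarrow> bool" where
  "surv_regvar_at_1 M V \<gamma> \<longleftrightarrow>
     (\<forall>t>0. ((\<lambda>u. measure M {\<omega> \<in> space M. V \<omega> > 1 - t / u} /
                  measure M {\<omega> \<in> space M. V \<omega> > 1 - 1 / u}) \<longlongrightarrow> t powr \<gamma>) at_top)"

end

theory Submission
  imports Defs "HOL-Real_Asymp.Real_Asymp"
begin

text \<open>
  Conditioning on S gives P(S Z > u) = E exp(-v S^(-q)) with v = \<theta> u^q. For 1 - \<delta> \<le> s \<le> 1,
  1 + q (1 - s) \<le> s^(-q) \<le> 1 + q (1 - \<delta>)^(-(q+1)) (1 - s), so up to a factor that tends to 1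
  as \<delta> \<rightarrow> 0 the probability is exp(-v) times the Laplace transform of 1 - S at q v. The
  distribution function G(x) = P(1 - S < x) is regularly varying at 0 with index \<gamma>, and Karamata's
  Abelian theorem (Potter bounds and dominated convergence) gives
  \<integral>_0^\<infinity> exp(-t) G(t/r) dt \<sim> \<Gamma>(\<gamma> + 1) G(1/r) as r \<rightarrow> \<infinity>.
\<close>

lemma doubling_power_bound:
  fixes G :: "real \<Rightarrow> real"
  assumes mono: "mono G" and G_le1: "\<And>x. G x \<le> 1" and G_pos: "\<And>x. x > 0 \<Longrightarrow> G x > 0"
    and x0: "x0 > 0" and K: "K \<ge> 1"
    and doubling: "\<And>x. 0 < x \<Longrightarrow> x \<le> x0 \<Longrightarrow> G (2 * x) \<le> K * G x"
  shows "0 < x \<Longrightarrow> x \<le> x0 \<Longrightarrow> y \<le> 2 ^ k * x \<Longrightarrow> G y \<le> K ^ k * G x / G x0"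
proof (induction k arbitrary: x y)
  case 0
  then have "G y \<le> G x" using mono by (simp add: monoD)
  also have "\<dots> \<le> G x / G x0"
    using G_pos[OF \<open>0 < x\<close>] G_pos[OF x0] G_le1[of x0] by (simp add: le_divide_eq)
  finally show ?case by simp
next
  case (Suc k)
  show ?case
  proof (cases "2 * x \<le> x0")
    case True
    have "G y \<le> K ^ k * G (2 * x) / G x0"
      using Suc.prems True by (intro Suc.IH) (auto simp: ac_simps)
    also have "\<dots> \<le> K ^ k * (K * G x) / G x0"
      using doubling[OF Suc.prems(1,2)] G_pos[OF x0] K by (intro divide_right_mono mult_left_mono) auto
    finally show ?thesis by (simp add: ac_simps)
  next
    case False
    have "G x0 \<le> K * G (x0 / 2)" using doubling[of "x0 / 2"] x0 by simp
    also have "\<dots> \<le> K * G x" using False K by (intro mult_left_mono monoD[OF mono]) auto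
    finally have "G x0 \<le> K * G x" .
    then have "K ^ k * G x0 \<le> K ^ k * (K * G x)" using K by (intro mult_left_mono) auto
    then have "K ^ k \<le> K ^ k * (K * G x) / G x0" using G_pos[OF x0] by (simp add: le_divide_eq)
    moreover have "G y \<le> K ^ k" using G_le1[of y] one_le_power[OF K, of k] by linarith
    ultimately show ?thesis by (simp add: ac_simps)
  qed
qed

lemma regvar_doubling_near_0:
  fixes G :: "real \<Rightarrow> real"
  assumes G_pos: "\<And>x. x > 0 \<Longrightarrow> G x > 0"
    and lim2: "((\<lambda>u. G (2 / u) / G (1 / u)) \<longlongrightarrow> 2 powr \<gamma>) at_top" and K: "2 powr \<gamma> < K"
  obtains x0 where "x0 > 0" "\<And>x. 0 < x \<Longrightarrow> x \<le> x0 \<Longrightarrow> G (2 * x) \<le> K * G x"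
proof -
  obtain U where U: "\<And>u. u \<ge> U \<Longrightarrow> G (2 / u) / G (1 / u) < K"
    using order_tendstoD(2)[OF lim2 K] by (auto simp: eventually_at_top_linorder)
  show thesis
  proof
    show "1 / max U 1 > 0" by simp
    fix x
    assume x: "0 < x" "x \<le> 1 / max U 1"
    then have "max U 1 \<le> 1 / x" by (simp add: le_divide_eq mult.commute)
    then have "G (2 * x) / G x < K" using U[of "1 / x"] by simp
    then show "G (2 * x) \<le> K * G x" using G_pos[OF \<open>0 < x\<close>] by (simp add: divide_less_eq)
  qed
qed

lemma pow2_between:
  fixes t :: real
  assumes "t \<ge> 1"
  obtains k :: nat where "t \<le> 2 ^ k" "2 ^ k \<le> 2 * t"
proof -
  define k where "k = nat \<lceil>log 2 t\<rceil>"
  have "log 2 t \<ge> 0" using assms by simp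
  then have "log 2 t \<le> k" "k < log 2 t + 1" unfolding k_def by linarith+
  then have "2 powr log 2 t \<le> 2 powr k" "2 powr k \<le> 2 powr (log 2 t + 1)"
    by (intro powr_mono; simp)+
  then show thesis using assms by (intro that[of k]) (simp_all add: powr_realpow powr_add)
qed

lemma potter_bound:
  fixes G :: "real \<Rightarrow> real"
  assumes mono: "mono G" and G_le1: "\<And>x. G x \<le> 1" and G_pos: "\<And>x. x > 0 \<Longrightarrow> G x > 0"
    and \<gamma>: "\<gamma> \<ge> 0" and lim2: "((\<lambda>u. G (2 / u) / G (1 / u)) \<longlongrightarrow> 2 powr \<gamma>) at_top"
  obtains C where "C > 0"
    "eventually (\<lambda>r. \<forall>t>0. G (t / r) \<le> C * (1 + t powr (\<gamma> + 1)) * G (1 / r)) at_top"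
proof -
  define K where "K = (2::real) powr (\<gamma> + 1)"
  have K_eq: "K = 2 * 2 powr \<gamma>" by (simp add: K_def powr_add)
  have "2 powr \<gamma> \<ge> 1" using \<gamma> by (simp add: ge_one_powr_ge_zero)
  then have K2: "K \<ge> 2" and "2 powr \<gamma> < K" unfolding K_eq by linarith+
  then obtain x0 where x0: "x0 > 0" and doubling: "\<And>x. 0 < x \<Longrightarrow> x \<le> x0 \<Longrightarrow> G (2 * x) \<le> K * G x"
    using regvar_doubling_near_0[OF G_pos lim2] by blast
  define C where "C = K / G x0"
  have C1: "C \<ge> 1"
    using K2 G_pos[OF x0] G_le1[of x0] by (simp add: C_def le_divide_eq)
  have bound: "G (t * x) \<le> C * (1 + t powr (\<gamma> + 1)) * G x"
    if x: "0 < x" "x \<le> x0" and t: "0 < t" for x t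
  proof (cases "t \<le> 1")
    case True
    have "G (t * x) \<le> G x" using True x by (intro monoD[OF mono]) (simp add: mult_le_cancel_right1)
    also have "1 \<le> C * (1 + t powr (\<gamma> + 1))"
      using mult_mono[OF C1, of 1 "1 + t powr (\<gamma> + 1)"] C1 by simp
    then have "G x \<le> C * (1 + t powr (\<gamma> + 1)) * G x"
      using G_pos[OF x(1)] by (simp add: mult_le_cancel_right1)
    finally show ?thesis .
  next
    case False
    then obtain k where t_le: "t \<le> 2 ^ k" and le_2t: "(2::real) ^ k \<le> 2 * t"
      using pow2_between[of t] by force
    have "G (t * x) \<le> K ^ k * G x / G x0"
      using doubling_power_bound[OF mono G_le1 G_pos x0 _ doubling] K2 x t_le
      by (simp add: mult_right_mono)
    also have "K ^ k = (2 ^ k) powr (\<gamma> + 1)"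
      by (simp add: K_def powr_realpow[symmetric] powr_powr mult.commute)
    also have "\<dots> \<le> (2 * t) powr (\<gamma> + 1)" using le_2t \<gamma> by (intro powr_mono2) auto
    also have "\<dots> = K * t powr (\<gamma> + 1)" using t by (simp add: K_def powr_mult)
    finally have "G (t * x) \<le> C * t powr (\<gamma> + 1) * G x"
      using G_pos[OF x0] G_pos[OF x(1)] by (simp add: C_def divide_right_mono mult_right_mono)
    also have "\<dots> \<le> C * (1 + t powr (\<gamma> + 1)) * G x"
      using C1 G_pos[OF x(1)] by (intro mult_right_mono mult_left_mono) auto
    finally show ?thesis .
  qed
  have "eventually (\<lambda>r. \<forall>t>0. G (t / r) \<le> C * (1 + t powr (\<gamma> + 1)) * G (1 / r)) at_top"
    using eventually_ge_at_top[of "1 / x0"]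
  proof eventually_elim
    case (elim r)
    moreover have "0 < 1 / x0" using x0 by simp
    ultimately have "r > 0" by linarith
    then have "0 < 1 / r" "1 / r \<le> x0" using elim x0 by (auto simp: field_simps)
    then show ?case using bound[of "1 / r"] by simp
  qed
  moreover have "C > 0" using C1 by simp
  ultimately show thesis using that by blast
qed

lemma has_bochner_integral_exp_neg_powr:
  assumes "s > (0::real)"
  shows "has_bochner_integral lborel (\<lambda>t. indicator {0<..} t * exp (-t) * t powr (s - 1)) (Gamma s)"
proof -
  have "has_bochner_integral lborel (\<lambda>t. indicator {0..} t * t powr (s - 1) / exp t) (Gamma s)"
    by (rule has_bochner_integral_nn_integral)
       (use Gamma_conv_nn_integral_real[OF assms] assms Gamma_real_pos in \<open>auto simp: less_imp_le\<close>)
  moreover have "(\<lambda>t. indicator {0..} t * t powr (s - 1) / exp t) =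
                 (\<lambda>t. indicator {0<..} t * exp (-t) * t powr (s - 1))"
    by (auto simp: indicator_def exp_minus field_simps)
  ultimately show ?thesis by simp
qed

lemma integrable_exp_neg_powr:
  "p \<ge> 0 \<Longrightarrow> integrable lborel (\<lambda>t::real. indicator {0<..} t * exp (-t) * t powr p)"
  using has_bochner_integral_exp_neg_powr[of "p + 1"] by (simp add: has_bochner_integral_iff)

lemma integrable_exp_neg_mult_bounded:
  fixes h :: "real \<Rightarrow> real"
  assumes "h \<in> borel_measurable borel" and "\<And>t. \<bar>h t\<bar> \<le> 1"
  shows "integrable lborel (\<lambda>t. indicator {0<..} t * exp (-t) * h t)"
proof (rule Bochner_Integration.integrable_bound[OF integrable_exp_neg_powr[of 0]])
  show "(\<lambda>t. indicator {0<..} t * exp (-t) * h t) \<in> borel_measurable lborel"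
    using assms(1) by measurable
  show "AE t in lborel. norm (indicator {0<..} t * exp (-t) * h t)
          \<le> norm (indicator {0<..} t * exp (-t) * t powr 0)"
    using assms(2) by (intro AE_I2) (auto simp: indicator_def abs_mult mult_left_le)
qed simp

lemma regvar_laplace_abelian:
  fixes G :: "real \<Rightarrow> real" and h :: "real \<Rightarrow> real \<Rightarrow> real"
  assumes mono: "mono G" and G_le1: "\<And>x. G x \<le> 1" and G_pos: "\<And>x. x > 0 \<Longrightarrow> G x > 0"
    and \<gamma>: "\<gamma> \<ge> 0"
    and regvar: "\<And>t. t > 0 \<Longrightarrow> ((\<lambda>u. G (t / u) / G (1 / u)) \<longlongrightarrow> t powr \<gamma>) at_top"
    and h_measurable: "\<And>r. h r \<in> borel_measurable borel"
    and h_bounds: "\<And>r t. 0 \<le> h r t \<and> h r t \<le> 1"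
    and h_lim: "\<And>t. t > 0 \<Longrightarrow> ((\<lambda>r. h r t) \<longlongrightarrow> 1) at_top"
  shows "((\<lambda>r. (\<integral>t. indicator {0<..} t * exp (-t) * h r t * G (t / r) \<partial>lborel) / G (1 / r))
           \<longlongrightarrow> Gamma (\<gamma> + 1)) at_top"
proof -
  obtain C where C: "C > 0"
    and potter: "eventually (\<lambda>r. \<forall>t>0. G (t / r) \<le> C * (1 + t powr (\<gamma> + 1)) * G (1 / r)) at_top"
    using potter_bound[OF mono G_le1 G_pos \<gamma> regvar[of 2]] by auto
  have [measurable]: "G \<in> borel_measurable borel" by (rule borel_measurable_mono[OF mono])
  define s where "s r t = indicator {0<..} t * exp (-t) * h r t * (G (t / r) / G (1 / r))" for r t
  define w where "w t = C * (indicator {0<..} t * exp (-t) * t powr 0)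
                         + C * (indicator {0<..} t * exp (-t) * t powr (\<gamma> + 1))" for t :: real
  have "((\<lambda>r. integral\<^sup>L lborel (s r)) \<longlongrightarrow> (\<integral>t. indicator {0<..} t * exp (-t) * t powr \<gamma> \<partial>lborel)) at_top"
  proof (rule integral_dominated_convergence_at_top[where w = w])
    show "(\<lambda>t. indicator {0<..} t * exp (-t) * t powr \<gamma>) \<in> borel_measurable lborel" by measurable
    show "integrable lborel w"
      unfolding w_def using integrable_exp_neg_powr[of 0] integrable_exp_neg_powr[of "\<gamma> + 1"] \<gamma> by simp
    show "s r \<in> borel_measurable lborel" for r
      unfolding s_def using h_measurable[of r] by measurable
    show "AE t in lborel. ((\<lambda>r. s r t) \<longlongrightarrow> indicator {0<..} t * exp (-t) * t powr \<gamma>) at_top"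
    proof (intro AE_I2)
      fix t :: real
      show "((\<lambda>r. s r t) \<longlongrightarrow> indicator {0<..} t * exp (-t) * t powr \<gamma>) at_top"
      proof (cases "t > 0")
        case True
        have "((\<lambda>r. indicator {0<..} t * exp (-t) * h r t * (G (t / r) / G (1 / r)))
               \<longlongrightarrow> indicator {0<..} t * exp (-t) * 1 * t powr \<gamma>) at_top"
          by (intro tendsto_intros h_lim regvar True)
        then show ?thesis by (simp add: s_def)
      qed (simp add: s_def)
    qed
    show "\<forall>\<^sub>F r in at_top. AE t in lborel. norm (s r t) \<le> w t"
      using potter eventually_gt_at_top[of 0]
    proof eventually_elim
      case (elim r)
      have "norm (s r t) \<le> w t" for t
      proof (cases "t > 0")
        case True
        have G_ratio: "G (t / r) / G (1 / r) \<le> C * (1 + t powr (\<gamma> + 1))"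
          using elim True G_pos[of "1 / r"] by (simp add: divide_le_eq)
        have "norm (s r t) = exp (-t) * h r t * (G (t / r) / G (1 / r))"
          using True elim h_bounds[of r t] G_pos[of "1 / r"] G_pos[of "t / r"] by (simp add: s_def)
        also have "\<dots> \<le> exp (-t) * 1 * (C * (1 + t powr (\<gamma> + 1)))"
          using h_bounds[of r t] G_ratio True elim G_pos[of "1 / r"] G_pos[of "t / r"]
          by (intro mult_mono) auto
        also have "\<dots> = w t" using True by (simp add: w_def algebra_simps)
        finally show ?thesis .
      qed (simp add: s_def w_def)
      then show ?case by simp
    qed
  qed
  moreover have "(\<integral>t. indicator {0<..} t * exp (-t) * t powr \<gamma> \<partial>lborel) = Gamma (\<gamma> + 1)"
    using has_bochner_integral_exp_neg_powr[of "\<gamma> + 1"] \<gamma> by (simp add: has_bochner_integral_iff)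
  moreover have "integral\<^sup>L lborel (s r) = (\<integral>t. indicator {0<..} t * exp (-t) * h r t * G (t / r) \<partial>lborel) / G (1 / r)" for r
  proof -
    have "s r = (\<lambda>t. indicator {0<..} t * exp (-t) * h r t * G (t / r) / G (1 / r))"
      by (simp add: s_def fun_eq_iff)
    then show ?thesis by simp
  qed
  ultimately show ?thesis by simp
qed

lemma nn_integral_exp_neg_greater:
  assumes "c \<ge> (0::real)"
  shows "(\<integral>\<^sup>+t. ennreal (if 0 < t \<and> c < t then exp (-t) else 0) \<partial>lborel) = ennreal (exp (-c))"
proof -
  have "(\<integral>\<^sup>+t. ennreal (indicator {c..} t * exp (-1 * t)) \<partial>lborel) = ennreal (exp (-1 * c) / 1)"
    by (rule nn_integral_has_integral_lebesgue) (use has_integral_exp_minus_to_infinity[of 1 c] in auto)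
  moreover have "AE t in lborel. t \<noteq> c" by (rule AE_lborel_singleton)
  then have "(\<integral>\<^sup>+t. ennreal (if 0 < t \<and> c < t then exp (-t) else 0) \<partial>lborel)
               = (\<integral>\<^sup>+t. ennreal (indicator {c..} t * exp (-1 * t)) \<partial>lborel)"
    by (rule nn_integral_cong_AE[OF eventually_mono]) (use assms in \<open>auto simp: indicator_def\<close>)
  ultimately show ?thesis by simp
qed

text \<open>Layer-cake formula: exp(-w) = \<integral>_w^\<infinity> exp(-t) dt for w \<ge> 0, then Tonelli.\<close>

lemma (in prob_space) integral_exp_neg_indicator_eq:
  fixes W :: "'a \<Rightarrow> real"
  assumes [measurable]: "W \<in> borel_measurable M" "A \<in> events"
    and W_nonneg: "AE \<omega> in M. W \<omega> \<ge> 0"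
  shows "(\<integral>\<omega>. exp (- W \<omega>) * indicator A \<omega> \<partial>M) =
         (\<integral>t. indicator {0<..} t * exp (-t) * prob {\<omega> \<in> space M. W \<omega> < t \<and> \<omega> \<in> A} \<partial>lborel)"
proof -
  define F where "F \<omega> t = (if 0 < t \<and> W \<omega> < t \<and> \<omega> \<in> A then exp (-t) else 0)" for \<omega> t
  define g where "g t = indicator {0<..} t * exp (-t) * prob {\<omega> \<in> space M. W \<omega> < t \<and> \<omega> \<in> A}" for t
  interpret pair_sigma_finite M lborel
    by (intro pair_sigma_finite.intro sigma_finite_lborel) (simp add: sigma_finite_measure_axioms)
  have inner: "(\<integral>\<^sup>+\<omega>. F \<omega> t \<partial>M) = g t" for t
  proof -
    have "(\<integral>\<^sup>+\<omega>. F \<omega> t \<partial>M)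
            = (\<integral>\<^sup>+\<omega>. ennreal (indicator {0<..} t * exp (-t)) * indicator {\<omega> \<in> space M. W \<omega> < t \<and> \<omega> \<in> A} \<omega> \<partial>M)"
      by (rule nn_integral_cong) (auto simp: F_def indicator_def)
    also have "\<dots> = g t"
      by (simp add: nn_integral_cmult_indicator emeasure_eq_measure ennreal_mult g_def)
    finally show ?thesis .
  qed
  have "ennreal (\<integral>\<omega>. exp (- W \<omega>) * indicator A \<omega> \<partial>M)
          = (\<integral>\<^sup>+\<omega>. ennreal (exp (- W \<omega>) * indicator A \<omega>) \<partial>M)"
    using W_nonneg
    by (intro nn_integral_eq_integral[symmetric])
       (auto intro!: integrable_const_bound[where B = 1] simp: indicator_def elim!: eventually_mono)
  also have "\<dots> = (\<integral>\<^sup>+\<omega>. (\<integral>\<^sup>+t. F \<omega> t \<partial>lborel) \<partial>M)"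
    using W_nonneg
  proof (intro nn_integral_cong_AE, eventually_elim)
    case (elim \<omega>)
    then show ?case by (cases "\<omega> \<in> A") (simp_all add: F_def nn_integral_exp_neg_greater)
  qed
  also have "\<dots> = (\<integral>\<^sup>+t. (\<integral>\<^sup>+\<omega>. F \<omega> t \<partial>M) \<partial>lborel)"
  proof -
    have F: "(\<lambda>(\<omega>, t). ennreal (F \<omega> t)) \<in> borel_measurable (M \<Otimes>\<^sub>M lborel)"
      unfolding F_def by measurable
    show ?thesis using Fubini'[OF F] by simp
  qed
  also have "\<dots> = (\<integral>\<^sup>+t. g t \<partial>lborel)"
    by (simp add: inner)
  also have "\<dots> = ennreal (integral\<^sup>L lborel g)"
  proof (rule nn_integral_eq_integral)
    have "mono (\<lambda>t. prob {\<omega> \<in> space M. W \<omega> < t \<and> \<omega> \<in> A})"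
      by (intro monoI finite_measure_mono) auto
    then show "integrable lborel g"
      unfolding g_def by (intro integrable_exp_neg_mult_bounded borel_measurable_mono) auto
  qed (simp add: g_def)
  finally have "ennreal (\<integral>\<omega>. exp (- W \<omega>) * indicator A \<omega> \<partial>M) = ennreal (integral\<^sup>L lborel g)" .
  moreover have "(\<integral>\<omega>. exp (- W \<omega>) * indicator A \<omega> \<partial>M) \<ge> 0" "integral\<^sup>L lborel g \<ge> 0"
    by (auto intro!: integral_nonneg_AE simp: g_def)
  ultimately show ?thesis unfolding g_def by simp
qed

lemma filterlim_mult_powr_at_top:
  fixes \<theta> u :: "'b \<Rightarrow> real"
  assumes "q > 0" "a > 0" "eventually (\<lambda>n. a \<le> \<theta> n) F" "filterlim u at_top F"
  shows "filterlim (\<lambda>n. \<theta> n * u n powr q) at_top F"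
proof (rule filterlim_at_top_mono)
  show "filterlim (\<lambda>n. a * u n powr q) at_top F"
    using assms by (intro filterlim_tendsto_pos_mult_at_top[OF tendsto_const]
                          filterlim_compose[OF real_powr_at_top])
  show "eventually (\<lambda>n. a * u n powr q \<le> \<theta> n * u n powr q) F"
    using assms(3) by eventually_elim (simp add: mult_right_mono)
qed

lemma (in prob_space) emeasure_mult_gt_indep:
  fixes S Z :: "'a \<Rightarrow> real"
  assumes [measurable]: "S \<in> borel_measurable M" "Z \<in> borel_measurable M"
    and indep: "indep_var borel S borel Z"
  shows "emeasure M {\<omega> \<in> space M. S \<omega> * Z \<omega> > u}
           = (\<integral>\<^sup>+\<omega>. emeasure M {\<omega>' \<in> space M. S \<omega> * Z \<omega>' > u} \<partial>M)"
proof -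
  define B where "B = {p \<in> space (borel \<Otimes>\<^sub>M borel :: (real \<times> real) measure). fst p * snd p > u}"
  have B[measurable]: "B \<in> sets (borel \<Otimes>\<^sub>M borel)" unfolding B_def by measurable
  interpret Z: prob_space "distr M borel Z" by (rule prob_space_distr) simp
  have "{\<omega> \<in> space M. S \<omega> * Z \<omega> > u} = (\<lambda>\<omega>. (S \<omega>, Z \<omega>)) -` B \<inter> space M"
    by (auto simp: B_def space_pair_measure)
  then have "emeasure M {\<omega> \<in> space M. S \<omega> * Z \<omega> > u}
               = emeasure (distr M (borel \<Otimes>\<^sub>M borel) (\<lambda>\<omega>. (S \<omega>, Z \<omega>))) B"
    by (simp add: emeasure_distr)
  also have "\<dots> = emeasure (distr M borel S \<Otimes>\<^sub>M distr M borel Z) B"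
    using indep by (simp add: indep_var_distribution_eq)
  also have "\<dots> = (\<integral>\<^sup>+s. emeasure (distr M borel Z) (Pair s -` B) \<partial>distr M borel S)"
    by (rule Z.emeasure_pair_measure_alt) simp
  also have "\<dots> = (\<integral>\<^sup>+\<omega>. emeasure (distr M borel Z) (Pair (S \<omega>) -` B) \<partial>M)"
    by (rule nn_integral_distr) (auto intro: measurable_emeasure_Pair)
  also have "\<dots> = (\<integral>\<^sup>+\<omega>. emeasure M {\<omega>' \<in> space M. S \<omega> * Z \<omega>' > u} \<partial>M)"
  proof (rule nn_integral_cong)
    fix \<omega>
    have "Pair (S \<omega>) -` B = {z. S \<omega> * z > u}" by (auto simp: B_def space_pair_measure)
    then show "emeasure (distr M borel Z) (Pair (S \<omega>) -` B) = emeasure M {\<omega>' \<in> space M. S \<omega> * Z \<omega>' > u}"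
      by (subst emeasure_distr) (auto intro!: arg_cong[where f = "emeasure M"])
  qed
  finally show ?thesis .
qed

lemma powr_neg_ge_linear:
  fixes q s :: real
  assumes "q > 0" "0 < s" "s \<le> 1"
  shows "1 + q * (1 - s) \<le> s powr (- q)"
proof -
  have "q * (1 - s) \<le> q * (- ln s)" using ln_le_minus_one[of s] assms by (intro mult_left_mono) auto
  moreover have "1 + q * (- ln s) \<le> exp (q * (- ln s))" by (rule exp_ge_add_one_self)
  ultimately show ?thesis using assms by (simp add: powr_def)
qed

lemma powr_neg_le_linear:
  fixes q s :: real
  assumes q: "q > 0" and s: "0 < s" "s \<le> 1"
  shows "s powr (- q) \<le> 1 + q * (1 - s) * s powr (- (q + 1))"
proof -
  define y where "y = q * (- ln s)"
  have exp_y: "exp y = s powr (- q)" using s by (simp add: powr_def y_def)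
  have "(1 - y) * exp y \<le> exp (-y) * exp y"
    using exp_ge_add_one_self[of "-y"] by (intro mult_right_mono) auto
  then have "exp y \<le> 1 + y * exp y" by (simp add: algebra_simps exp_minus_inverse)
  also have "- ln s \<le> (1 - s) / s"
    using ln_le_minus_one[of "1 / s"] s by (simp add: ln_div diff_divide_distrib)
  then have "y \<le> q * ((1 - s) / s)" unfolding y_def using q by (intro mult_left_mono) auto
  then have "1 + y * exp y \<le> 1 + q * ((1 - s) / s) * exp y"
    using mult_right_mono[of y "q * ((1 - s) / s)" "exp y"] by simp
  also have "\<dots> = 1 + q * (1 - s) * (s powr (- q) / s)" by (simp add: exp_y)
  also have "s powr (- q) / s = s powr (- (q + 1))"
    using s by (simp add: powr_add[of s "- q" "- 1", simplified] powr_minus_divide)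
  finally show ?thesis by (simp only: exp_y)
qed

locale regvar_at_1 = prob_space +
  fixes S :: "'a \<Rightarrow> real" and \<gamma> :: real
  assumes S_measurable [measurable]: "S \<in> borel_measurable M"
    and S_range: "AE \<omega> in M. 0 \<le> S \<omega> \<and> S \<omega> \<le> 1"
    and S_endpoint: "\<And>\<epsilon>. \<epsilon> > 0 \<Longrightarrow> prob {\<omega> \<in> space M. S \<omega> > 1 - \<epsilon>} > 0"
    and gamma_nonneg: "\<gamma> \<ge> 0"
    and S_regvar: "surv_regvar_at_1 M S \<gamma>"
begin

definition tail :: "real \<Rightarrow> real" where
  "tail x = prob {\<omega> \<in> space M. S \<omega> > 1 - x}"

text \<open>This is P(S Z > v^(1/q)) for Z independent of S with P(Z > z) = exp(-z^q).\<close>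

definition mixed_weibull_tail :: "real \<Rightarrow> real \<Rightarrow> real" where
  "mixed_weibull_tail q v = (\<integral>\<omega>. (if S \<omega> > 0 then exp (- v * S \<omega> powr (- q)) else 0) \<partial>M)"

lemma tail_mono: "mono tail"
  unfolding tail_def by (intro monoI finite_measure_mono) auto

lemma tail_le_1: "tail x \<le> 1"
  unfolding tail_def by (rule prob_le_1)

lemma tail_pos: "x > 0 \<Longrightarrow> tail x > 0"
  unfolding tail_def by (rule S_endpoint)

lemma tail_regvar: "t > 0 \<Longrightarrow> ((\<lambda>u. tail (t / u) / tail (1 / u)) \<longlongrightarrow> t powr \<gamma>) at_top"
  using S_regvar unfolding surv_regvar_at_1_def tail_def by blast

lemma tail_laplace_abelian:
  assumes "\<And>r. h r \<in> borel_measurable borel" "\<And>r t. 0 \<le> h r t \<and> h r t \<le> 1"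
    and "\<And>t. t > 0 \<Longrightarrow> ((\<lambda>r. h r t) \<longlongrightarrow> 1) at_top"
  shows "((\<lambda>r. (\<integral>t. indicator {0<..} t * exp (-t) * h r t * tail (t / r) \<partial>lborel) / tail (1 / r))
           \<longlongrightarrow> Gamma (\<gamma> + 1)) at_top"
  using regvar_laplace_abelian[OF tail_mono tail_le_1 tail_pos gamma_nonneg tail_regvar assms] .

lemma mono_prob_S_gt:
  assumes "A \<in> events" and "r > 0"
  shows "mono (\<lambda>t. prob {\<omega> \<in> space M. S \<omega> > 1 - t / r \<and> \<omega> \<in> A})"
proof (intro monoI finite_measure_mono)
  fix x y :: real
  assume "x \<le> y"
  then have "1 - y / r \<le> 1 - x / r" using \<open>r > 0\<close> by (simp add: divide_right_mono)
  then show "{\<omega> \<in> space M. S \<omega> > 1 - x / r \<and> \<omega> \<in> A} \<subseteq> {\<omega> \<in> space M. S \<omega> > 1 - y / r \<and> \<omega> \<in> A}"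
    by auto
qed (use assms in measurable)

lemma integrable_exp_one_minus_S:
  assumes [measurable]: "A \<in> events" and "r \<ge> 0"
  shows "integrable M (\<lambda>\<omega>. exp (- (r * (1 - S \<omega>))) * indicator A \<omega>)"
proof (rule integrable_const_bound[where B = 1])
  show "AE \<omega> in M. norm (exp (- (r * (1 - S \<omega>))) * indicator A \<omega>) \<le> 1"
    using S_range by eventually_elim (use \<open>r \<ge> 0\<close> in \<open>simp add: indicator_def\<close>)
qed simp

lemma laplace_one_minus_S:
  assumes [measurable]: "A \<in> events" and "r > 0"
  shows "(\<integral>\<omega>. exp (- (r * (1 - S \<omega>))) * indicator A \<omega> \<partial>M)
           = (\<integral>t. indicator {0<..} t * exp (-t) * prob {\<omega> \<in> space M. S \<omega> > 1 - t / r \<and> \<omega> \<in> A} \<partial>lborel)"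
proof -
  have "r * (1 - s) < t \<longleftrightarrow> 1 - t / r < s" for s t
    using \<open>r > 0\<close> by (auto simp: field_simps)
  moreover have "AE \<omega> in M. r * (1 - S \<omega>) \<ge> 0"
    using S_range by eventually_elim (use \<open>r > 0\<close> in simp)
  ultimately show ?thesis
    by (subst integral_exp_neg_indicator_eq) auto
qed

lemma mixed_weibull_tail_upper:
  assumes q: "q > 0" and v: "v > 0"
  shows "mixed_weibull_tail q v
           \<le> exp (- v) * (\<integral>t. indicator {0<..} t * exp (-t) * tail (t / (q * v)) \<partial>lborel)"
proof -
  have "mixed_weibull_tail q v \<le> (\<integral>\<omega>. exp (- v) * (exp (- (q * v * (1 - S \<omega>))) * indicator (space M) \<omega>) \<partial>M)"
    unfolding mixed_weibull_tail_def
  proof (rule integral_mono_AE')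
    show "integrable M (\<lambda>\<omega>. exp (- v) * (exp (- (q * v * (1 - S \<omega>))) * indicator (space M) \<omega>))"
      using q v by (intro integrable_mult_right integrable_exp_one_minus_S) auto
    show "AE \<omega> in M. (if S \<omega> > 0 then exp (- v * S \<omega> powr (- q)) else 0)
            \<le> exp (- v) * (exp (- (q * v * (1 - S \<omega>))) * indicator (space M) \<omega>)"
      using S_range AE_space
    proof eventually_elim
      case (elim \<omega>)
      have "S \<omega> > 0 \<Longrightarrow> v * (1 + q * (1 - S \<omega>)) \<le> v * S \<omega> powr (- q)"
        using powr_neg_ge_linear[OF q, of "S \<omega>"] elim v by (intro mult_left_mono) auto
      then show ?case using elim by (auto simp: algebra_simps simp flip: exp_add)
    qed
  qed simp
  also have "\<dots> = exp (- v) * (\<integral>t. indicator {0<..} t * exp (-t) * tail (t / (q * v)) \<partial>lborel)"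
  proof -
    have "{\<omega> \<in> space M. S \<omega> > 1 - t \<and> \<omega> \<in> space M} = {\<omega> \<in> space M. S \<omega> > 1 - t}" for t
      by auto
    then show ?thesis using q v by (simp add: laplace_one_minus_S tail_def)
  qed
  finally show ?thesis .
qed

lemma mixed_weibull_tail_lower:
  assumes q: "q > 0" and v: "v > 0" and \<delta>: "0 < \<delta>" "\<delta> < 1" and c: "(1 - \<delta>) powr (- (q + 1)) \<le> c"
  shows "exp (- v) * (\<integral>t. indicator {0<..} t * exp (-t) * (if t \<le> q * c * v * \<delta> then 1 else 0)
                          * tail (t / (q * c * v)) \<partial>lborel)
           \<le> mixed_weibull_tail q v"
proof -
  define A where "A = {\<omega> \<in> space M. S \<omega> \<ge> 1 - \<delta>}"
  have A[measurable]: "A \<in> events" unfolding A_def by measurable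
  have "c > 0" using c \<delta> by (smt (verit) powr_gt_zero)
  then have r: "q * c * v > 0" using q v by simp
  have "(\<integral>t. indicator {0<..} t * exp (-t) * (if t \<le> q * c * v * \<delta> then 1 else 0) * tail (t / (q * c * v)) \<partial>lborel)
          \<le> (\<integral>t. indicator {0<..} t * exp (-t) * prob {\<omega> \<in> space M. S \<omega> > 1 - t / (q * c * v) \<and> \<omega> \<in> A} \<partial>lborel)"
  proof (rule integral_mono')
    show "integrable lborel (\<lambda>t. indicator {0<..} t * exp (-t) * prob {\<omega> \<in> space M. S \<omega> > 1 - t / (q * c * v) \<and> \<omega> \<in> A})"
      using mono_prob_S_gt[OF A r] by (intro integrable_exp_neg_mult_bounded borel_measurable_mono) auto
    fix t :: real
    have "t \<le> q * c * v * \<delta> \<Longrightarrow> t / (q * c * v) \<le> \<delta>"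
      using r by (simp add: divide_le_eq algebra_simps)
    then have "t \<le> q * c * v * \<delta> \<Longrightarrow> {\<omega> \<in> space M. S \<omega> > 1 - t / (q * c * v) \<and> \<omega> \<in> A}
            = {\<omega> \<in> space M. S \<omega> > 1 - t / (q * c * v)}"
      by (auto simp: A_def)
    then show "indicator {0<..} t * exp (-t) * (if t \<le> q * c * v * \<delta> then 1 else 0) * tail (t / (q * c * v))
                 \<le> indicator {0<..} t * exp (-t) * prob {\<omega> \<in> space M. S \<omega> > 1 - t / (q * c * v) \<and> \<omega> \<in> A}"
      by (auto simp: tail_def indicator_def)
  qed simp
  also have "\<dots> = (\<integral>\<omega>. exp (- (q * c * v * (1 - S \<omega>))) * indicator A \<omega> \<partial>M)"
    using r by (simp add: laplace_one_minus_S)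
  finally have "exp (- v) * (\<integral>t. indicator {0<..} t * exp (-t) * (if t \<le> q * c * v * \<delta> then 1 else 0) * tail (t / (q * c * v)) \<partial>lborel)
                  \<le> (\<integral>\<omega>. exp (- v) * (exp (- (q * c * v * (1 - S \<omega>))) * indicator A \<omega>) \<partial>M)"
    by (simp add: mult_left_mono)
  also have "\<dots> \<le> mixed_weibull_tail q v"
    unfolding mixed_weibull_tail_def
  proof (rule integral_mono_AE')
    show "integrable M (\<lambda>\<omega>. if S \<omega> > 0 then exp (- v * S \<omega> powr (- q)) else 0)"
      using v by (intro integrable_const_bound[where B = 1]) auto
    show "AE \<omega> in M. exp (- v) * (exp (- (q * c * v * (1 - S \<omega>))) * indicator A \<omega>)
            \<le> (if S \<omega> > 0 then exp (- v * S \<omega> powr (- q)) else 0)"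
      using S_range
    proof eventually_elim
      case (elim \<omega>)
      show ?case
      proof (cases "\<omega> \<in> A")
        case True
        then have S: "1 - \<delta> \<le> S \<omega>" "S \<omega> > 0" using \<delta> by (auto simp: A_def)
        have "S \<omega> powr (- (q + 1)) \<le> c"
          using S \<delta> q c by (smt (verit) powr_mono2')
        then have "S \<omega> powr (- q) \<le> 1 + q * (1 - S \<omega>) * c"
          using powr_neg_le_linear[OF q S(2)] elim q by (smt (verit) mult_left_mono mult_nonneg_nonneg)
        then have "v * S \<omega> powr (- q) \<le> v * (1 + q * (1 - S \<omega>) * c)" using v by (intro mult_left_mono) auto
        then show ?thesis using True S by (auto simp: algebra_simps simp flip: exp_add)
      qed simp
    qed
  qed simp
  finally show ?thesis .
qed

lemma mixed_weibull_tail_eventually_le: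
  assumes q: "q > 0" and a: "a > 1"
  shows "eventually (\<lambda>v. mixed_weibull_tail q v < a * (Gamma (\<gamma> + 1) * exp (- v) * tail (1 / (q * v)))) at_top"
proof -
  have Gamma_pos: "Gamma (\<gamma> + 1) > 0" using gamma_nonneg by (intro Gamma_real_pos) simp
  have qv: "filterlim (\<lambda>v. q * v) at_top at_top"
    by (rule filterlim_tendsto_pos_mult_at_top[OF tendsto_const q filterlim_ident])
  have "((\<lambda>r. (\<integral>t. indicator {0<..} t * exp (-t) * 1 * tail (t / r) \<partial>lborel) / tail (1 / r))
          \<longlongrightarrow> Gamma (\<gamma> + 1)) at_top"
    by (rule tail_laplace_abelian) auto
  then have "eventually (\<lambda>v. (\<integral>t. indicator {0<..} t * exp (-t) * tail (t / (q * v)) \<partial>lborel)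
                             / tail (1 / (q * v)) < a * Gamma (\<gamma> + 1)) at_top"
    using a Gamma_pos by (intro order_tendstoD(2)[OF filterlim_compose[OF _ qv]]) auto
  then show ?thesis using eventually_gt_at_top[of 0]
  proof eventually_elim
    case (elim v)
    then have "tail (1 / (q * v)) > 0" using q by (intro tail_pos) simp
    then have "(\<integral>t. indicator {0<..} t * exp (-t) * tail (t / (q * v)) \<partial>lborel)
                 < a * Gamma (\<gamma> + 1) * tail (1 / (q * v))"
      using elim by (simp add: divide_less_eq)
    then have "exp (- v) * (\<integral>t. indicator {0<..} t * exp (-t) * tail (t / (q * v)) \<partial>lborel)
                 < a * (Gamma (\<gamma> + 1) * exp (- v) * tail (1 / (q * v)))"
      by (simp add: algebra_simps)
    then show ?case using mixed_weibull_tail_upper[OF q elim(2)] by linarith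
  qed
qed

lemma mixed_weibull_tail_eventually_ge:
  assumes q: "q > 0" and \<delta>: "0 < \<delta>" "\<delta> < 1" and a: "a < (1 - \<delta>) powr ((q + 1) * \<gamma>)"
  shows "eventually (\<lambda>v. a * (Gamma (\<gamma> + 1) * exp (- v) * tail (1 / (q * v))) < mixed_weibull_tail q v) at_top"
proof -
  define c where "c = (1 - \<delta>) powr (- (q + 1))"
  have "1 / c = (1 - \<delta>) powr (q + 1)"
    unfolding c_def by (simp only: powr_minus divide_inverse inverse_inverse_eq mult_1)
  then have c: "c > 0" "(1 / c) powr \<gamma> = (1 - \<delta>) powr ((q + 1) * \<gamma>)"
    using \<delta> by (simp_all add: c_def powr_powr)
  have Gamma_pos: "Gamma (\<gamma> + 1) > 0" using gamma_nonneg by (intro Gamma_real_pos) simp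
  have qv: "filterlim (\<lambda>v. q * v) at_top at_top"
    by (rule filterlim_tendsto_pos_mult_at_top[OF tendsto_const q filterlim_ident])
  have qcv: "filterlim (\<lambda>v. q * c * v) at_top at_top"
    using c q by (intro filterlim_tendsto_pos_mult_at_top[OF tendsto_const _ filterlim_ident]) simp
  define I where "I v = (\<integral>t. indicator {0<..} t * exp (-t) * (if t \<le> q * c * v * \<delta> then 1 else 0)
                          * tail (t / (q * c * v)) \<partial>lborel)" for v
  have "((\<lambda>r. (\<integral>t. indicator {0<..} t * exp (-t) * (if t \<le> r * \<delta> then 1 else 0) * tail (t / r) \<partial>lborel)
            / tail (1 / r)) \<longlongrightarrow> Gamma (\<gamma> + 1)) at_top"
  proof (rule tail_laplace_abelian)
    show "((\<lambda>r. if t \<le> r * \<delta> then 1 else 0 :: real) \<longlongrightarrow> 1) at_top" if "t > 0" for t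
      using \<delta> by (intro tendsto_eventually eventually_mono[OF eventually_ge_at_top[of "t / \<delta>"]])
                 (auto simp: field_simps)
  qed auto
  from filterlim_compose[OF this qcv]
  have "((\<lambda>v. I v / tail (1 / (q * c * v))) \<longlongrightarrow> Gamma (\<gamma> + 1)) at_top"
    by (simp add: I_def o_def)
  moreover have "((\<lambda>v. tail ((1 / c) / (q * v)) / tail (1 / (q * v))) \<longlongrightarrow> (1 / c) powr \<gamma>) at_top"
    using c by (intro filterlim_compose[OF tail_regvar qv]) simp
  ultimately have "((\<lambda>v. I v / tail (1 / (q * c * v)) * (tail (1 / (q * c * v)) / tail (1 / (q * v))))
                     \<longlongrightarrow> Gamma (\<gamma> + 1) * (1 - \<delta>) powr ((q + 1) * \<gamma>)) at_top"
    by (subst c(2)[symmetric], intro tendsto_mult) (simp_all add: field_simps)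
  then have "eventually (\<lambda>v. a * Gamma (\<gamma> + 1) < I v / tail (1 / (q * c * v)) * (tail (1 / (q * c * v)) / tail (1 / (q * v)))) at_top"
    using a Gamma_pos by (intro order_tendstoD(1)) auto
  then show ?thesis using eventually_gt_at_top[of 0]
  proof eventually_elim
    case (elim v)
    have "tail (1 / (q * v)) > 0" "tail (1 / (q * c * v)) > 0" using q c elim by (simp_all add: tail_pos)
    then have "a * Gamma (\<gamma> + 1) * tail (1 / (q * v)) < I v"
      using elim by (simp add: field_simps)
    then have "a * (Gamma (\<gamma> + 1) * exp (- v) * tail (1 / (q * v))) < exp (- v) * I v"
      by (simp add: algebra_simps)
    also have "\<dots> \<le> mixed_weibull_tail q v"
      unfolding I_def using q elim \<delta> by (intro mixed_weibull_tail_lower) (simp_all add: c_def)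
    finally show ?case .
  qed
qed

theorem mixed_weibull_tail_asymp:
  assumes q: "q > 0"
  shows "mixed_weibull_tail q \<sim>[at_top] (\<lambda>v. Gamma (\<gamma> + 1) * exp (- v) * tail (1 / (q * v)))"
proof (rule asymp_equivI')
  have R_pos: "eventually (\<lambda>v. Gamma (\<gamma> + 1) * exp (- v) * tail (1 / (q * v)) > 0) at_top"
    using eventually_gt_at_top[of 0]
    by eventually_elim (use gamma_nonneg q in \<open>simp add: Gamma_real_pos tail_pos\<close>)
  show "((\<lambda>v. mixed_weibull_tail q v / (Gamma (\<gamma> + 1) * exp (- v) * tail (1 / (q * v)))) \<longlongrightarrow> 1) at_top"
  proof (rule order_tendstoI)
    fix a :: real
    assume "a > 1"
    show "eventually (\<lambda>v. mixed_weibull_tail q v / (Gamma (\<gamma> + 1) * exp (- v) * tail (1 / (q * v))) < a) at_top"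
      using mixed_weibull_tail_eventually_le[OF q \<open>a > 1\<close>] R_pos
      by eventually_elim (simp add: divide_less_eq)
  next
    fix a :: real
    assume "a < 1"
    have "((\<lambda>\<delta>. (1 - \<delta>) powr ((q + 1) * \<gamma>)) \<longlongrightarrow> (1 - 0) powr ((q + 1) * \<gamma>)) (at_right 0)"
      by (intro tendsto_intros) auto
    then have "eventually (\<lambda>\<delta>. a < (1 - \<delta>) powr ((q + 1) * \<gamma>) \<and> \<delta> < 1 \<and> 0 < \<delta>) (at_right 0)"
      using \<open>a < 1\<close> by (intro eventually_conj order_tendstoD(1) eventually_at_right_less)
                        (auto simp: eventually_at_right_field intro: exI[of _ 1])
    then obtain \<delta> where \<delta>: "0 < \<delta>" "\<delta> < 1" "a < (1 - \<delta>) powr ((q + 1) * \<gamma>)"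
      using eventually_happens'[OF trivial_limit_at_right_real] by blast
    show "eventually (\<lambda>v. a < mixed_weibull_tail q v / (Gamma (\<gamma> + 1) * exp (- v) * tail (1 / (q * v)))) at_top"
      using mixed_weibull_tail_eventually_ge[OF q \<delta>] R_pos
      by eventually_elim (simp add: less_divide_eq)
  qed
qed

lemma prob_mult_gt_eq_mixed_weibull_tail:
  fixes Z :: "'a \<Rightarrow> real"
  assumes [measurable]: "Z \<in> borel_measurable M" and indep: "indep_var borel S borel Z"
    and \<theta>: "\<theta> \<ge> 0" and u: "u > 0" "z0 \<le> u"
    and Z_tail: "\<forall>z\<ge>z0. 1 - prob {\<omega> \<in> space M. Z \<omega> \<le> z} = exp (- \<theta> * z powr q)"
  shows "prob {\<omega> \<in> space M. S \<omega> * Z \<omega> > u} = mixed_weibull_tail q (\<theta> * u powr q)"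
proof -
  define f where "f s = (if s > 0 then exp (- (\<theta> * u powr q) * s powr (- q)) else 0)" for s :: real
  have f_bounds: "0 \<le> f s" "f s \<le> 1" for s
    using \<theta> by (auto simp: f_def)
  have "emeasure M {\<omega> \<in> space M. S \<omega> * Z \<omega> > u} = (\<integral>\<^sup>+\<omega>. emeasure M {\<omega>' \<in> space M. S \<omega> * Z \<omega>' > u} \<partial>M)"
    by (rule emeasure_mult_gt_indep[OF S_measurable _ indep]) simp
  also have "\<dots> = (\<integral>\<^sup>+\<omega>. ennreal (f (S \<omega>)) \<partial>M)"
    using S_range
  proof (intro nn_integral_cong_AE, eventually_elim)
    case (elim \<omega>)
    show ?case
    proof (cases "S \<omega> > 0")
      case True
      have "{\<omega>' \<in> space M. S \<omega> * Z \<omega>' > u} = space M - {\<omega>' \<in> space M. Z \<omega>' \<le> u / S \<omega>}"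
        using True by (auto simp: pos_le_divide_eq mult.commute)
      moreover have "u \<le> u / S \<omega>" using elim True u by (simp add: le_divide_eq)
      then have "z0 \<le> u / S \<omega>" using u by linarith
      moreover have "\<theta> * (u / S \<omega>) powr q = \<theta> * u powr q * S \<omega> powr (- q)"
        using True u by (simp add: powr_divide powr_minus_divide)
      ultimately show ?thesis
        using True Z_tail by (simp add: emeasure_eq_measure prob_compl f_def)
    next
      case False
      then have "S \<omega> = 0" using elim by simp
      then show ?thesis using u by (simp add: f_def)
    qed
  qed
  also have "\<dots> = ennreal (mixed_weibull_tail q (\<theta> * u powr q))"
    unfolding mixed_weibull_tail_def f_def[symmetric] using f_bounds
    by (intro nn_integral_eq_integral integrable_const_bound[where B = 1]) (auto simp: f_def)
  finally show ?thesis
    using f_bounds by (simp add: emeasure_eq_measure mixed_weibull_tail_def f_def[symmetric] integral_nonneg)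
qed

end

theorem lemma3p2:
  fixes M :: "'a measure" and S :: "'a \<Rightarrow> real" and Z :: "nat \<Rightarrow> 'a \<Rightarrow> real"
    and \<theta> :: "nat \<Rightarrow> real" and u :: "nat \<Rightarrow> real" and q a b \<gamma> :: real
  assumes "prob_space M"
    and S_rv: "S \<in> borel_measurable M"
    and Z_rv: "\<And>n. n \<ge> 1 \<Longrightarrow> Z n \<in> borel_measurable M"
    and Z_pos: "\<And>n. n \<ge> 1 \<Longrightarrow> AE \<omega> in M. Z n \<omega> > 0"
    and q_pos: "q > 0"
    and ab: "0 < a" "a < b"
    and theta_bds: "\<And>n. n \<ge> 1 \<Longrightarrow> \<theta> n \<in> {a..b}"
    and Z_tail: "\<exists>z0. \<forall>n\<ge>1. \<forall>z\<ge>z0.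
                   1 - measure M {\<omega> \<in> space M. Z n \<omega> \<le> z} = exp (- \<theta> n * z powr q)"
    and S_nonneg: "AE \<omega> in M. S \<omega> \<ge> 0"
    and S_endpoint_le: "AE \<omega> in M. S \<omega> \<le> 1"
    and S_endpoint: "\<And>\<epsilon>. \<epsilon> > 0 \<Longrightarrow> measure M {\<omega> \<in> space M. S \<omega> > 1 - \<epsilon>} > 0"
    and gamma_nonneg: "\<gamma> \<ge> 0"
    and S_regvar: "surv_regvar_at_1 M S \<gamma>"
    and indep: "\<And>n. n \<ge> 1 \<Longrightarrow> prob_space.indep_var M borel S borel (Z n)"
    and u_pos: "\<And>n. n \<ge> 1 \<Longrightarrow> u n > 0"
    and u_lim: "filterlim u at_top sequentially"
  shows "(\<lambda>n. measure M {\<omega> \<in> space M. S \<omega> * Z n \<omega> > u n}) \<sim>[sequentially]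
         (\<lambda>n. Gamma (\<gamma> + 1) * exp (- \<theta> n * u n powr q) *
              measure M {\<omega> \<in> space M. S \<omega> > 1 - 1 / (q * \<theta> n * u n powr q)})"
proof -
  have "AE \<omega> in M. 0 \<le> S \<omega> \<and> S \<omega> \<le> 1"
    using S_nonneg S_endpoint_le by (rule eventually_conj)
  then interpret regvar_at_1 M S \<gamma>
    using \<open>prob_space M\<close> S_rv S_endpoint gamma_nonneg S_regvar
    by (simp add: regvar_at_1_def regvar_at_1_axioms_def)
  obtain z0 where z0: "\<forall>n\<ge>1. \<forall>z\<ge>z0. 1 - prob {\<omega> \<in> space M. Z n \<omega> \<le> z} = exp (- \<theta> n * z powr q)"
    using Z_tail by blast
  define v where "v n = \<theta> n * u n powr q" for n
  have "eventually (\<lambda>n. a \<le> \<theta> n) sequentially"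
    using eventually_ge_at_top[of 1] by eventually_elim (use theta_bds in auto)
  then have v_lim: "filterlim v at_top sequentially"
    unfolding v_def by (rule filterlim_mult_powr_at_top[OF q_pos ab(1) _ u_lim])
  have "eventually (\<lambda>n. z0 \<le> u n) sequentially"
    using u_lim by (simp add: filterlim_at_top)
  with eventually_ge_at_top[of 1]
  have "eventually (\<lambda>n. mixed_weibull_tail q (v n) = prob {\<omega> \<in> space M. S \<omega> * Z n \<omega> > u n}) sequentially"
  proof eventually_elim
    case (elim n)
    have "\<theta> n \<ge> 0" using theta_bds[OF elim(1)] ab by simp
    moreover have "\<forall>z\<ge>z0. 1 - prob {\<omega> \<in> space M. Z n \<omega> \<le> z} = exp (- \<theta> n * z powr q)"
      using z0 elim(1) by blast
    ultimately have "prob {\<omega> \<in> space M. S \<omega> * Z n \<omega> > u n} = mixed_weibull_tail q (v n)"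
      unfolding v_def
      by (rule prob_mult_gt_eq_mixed_weibull_tail[OF Z_rv[OF elim(1)] indep[OF elim(1)] _ u_pos[OF elim(1)] elim(2)])
    then show ?case ..
  qed
  moreover have "eventually (\<lambda>n. Gamma (\<gamma> + 1) * exp (- v n) * tail (1 / (q * v n)) =
      Gamma (\<gamma> + 1) * exp (- \<theta> n * u n powr q) * prob {\<omega> \<in> space M. S \<omega> > 1 - 1 / (q * \<theta> n * u n powr q)})
      sequentially"
    by (simp add: v_def tail_def mult.assoc)
  ultimately show ?thesis
    by (rule asymp_equiv_transfer[OF asymp_equiv_compose'[OF mixed_weibull_tail_asymp[OF q_pos] v_lim]])
qed

end
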